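(* The function $H:\mathbb{R}\to\mathbb{R}$, $H(x)=\psi'(x)\big(c-\tilde{R}(x,\bar{y})\big)+(\rho+\kappa)^{-1}\psi(x)$, has exactly one zero $\tilde{x}\in\mathbb{R}$.
   Context: Fix constants $\mu\in\mathbb{R}$, $\kappa>0$, $\sigma>0$, $\rho>0$, $\beta>0$, $c\geq0$, $\bar{y}>0$. Let $D_\alpha(x)=\frac{e^{-x^2/4}}{\Gamma(-\alpha)}\int_0^\infty t^{-\alpha-1}e^{-t^2/2-xt}dt$ ($\alpha<0$) be the parabolic cylinder function, and $\psi(x)=e^{\frac{\kappa(x-\mu)^2}{2\sigma^2}}D_{-\rho/\kappa}\big(-\frac{x-\mu}{\sigma}\sqrt{2\kappa}\big)$; $\psi$ is the strictly increasing positive solution of $\frac{\sigma^2}{2}u''+\kappa(\mu-x)u'-\rho u=0$. Let $\tilde{R}(x,y)=\frac{\mu\kappa+\rho x-\beta(\rho+2\kappa)y}{\rho(\rho+\kappa)}$. *)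

theory Defs
  imports "HOL-Analysis.Analysis"
begin

text \<open>Parabolic cylinder function, integral representation for alpha < 0.\<close>
definition parabolic_cylinder_D :: "real \<Rightarrow> real \<Rightarrow> real" where
  "parabolic_cylinder_D \<alpha> x =
     exp (- (x\<^sup>2) / 4) / Gamma (- \<alpha>) *
     (LBINT t:{0<..}. t powr (- \<alpha> - 1) * exp (- (t\<^sup>2) / 2 - x * t))"

definition psi_fun :: "real \<Rightarrow> real \<Rightarrow> real \<Rightarrow> real \<Rightarrow> real \<Rightarrow> real" where
  "psi_fun \<mu> \<kappa> \<sigma> \<rho> x =
     exp (\<kappa> * (x - \<mu>)\<^sup>2 / (2 * \<sigma>\<^sup>2)) *
     parabolic_cylinder_D (- \<rho> / \<kappa>) (- ((x - \<mu>) / \<sigma>) * sqrt (2 * \<kappa>))"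

definition R_tilde :: "real \<Rightarrow> real \<Rightarrow> real \<Rightarrow> real \<Rightarrow> real \<Rightarrow> real \<Rightarrow> real" where
  "R_tilde \<mu> \<kappa> \<rho> \<beta> x y =
     (\<mu> * \<kappa> + \<rho> * x - \<beta> * (\<rho> + 2 * \<kappa>) * y) / (\<rho> * (\<rho> + \<kappa>))"

definition H_fun :: "real \<Rightarrow> real \<Rightarrow> real \<Rightarrow> real \<Rightarrow> real \<Rightarrow> real \<Rightarrow> real \<Rightarrow> real \<Rightarrow> real" where
  "H_fun \<mu> \<kappa> \<sigma> \<rho> \<beta> c ybar x =
     deriv (psi_fun \<mu> \<kappa> \<sigma> \<rho>) x * (c - R_tilde \<mu> \<kappa> \<rho> \<beta> x ybar)
     + psi_fun \<mu> \<kappa> \<sigma> \<rho> x / (\<rho> + \<kappa>)"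

end

theory Submission
  imports Defs
begin

(* Substituting into the integral representation of D gives
   psi(x) = M nu (a (x - mu)) / Gamma nu  with  nu = rho/kappa,  a = sqrt(2 kappa)/sigma  and
   M p s = int_0^oo t^(p-1) e^(-t^2/2) e^(s t) dt.
   Differentiation under the integral sign gives (M p)' = M (p+1) > 0, and
   c - R~(x, ybar) = (x0 - x)/(rho + kappa) is affine in x.  Hence H(x) is a positive multiple of
   F s + (s0 - s) F' s  with F = M nu and s = a (x - mu): the value at s0 of the tangent to F at s.
   This is positive for s <= s0, strictly decreasing for s >= s0 (its derivative is (s0 - s) F'' s),
   and tends to -oo because F'' is increasing; so it has exactly one zero. *)

lemma ex1_zero_if_pos_then_strict_antimono:
  fixes G :: "real \<Rightarrow> real"
  assumes cont: "continuous_on UNIV G"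
    and pos: "\<And>s. s \<le> s0 \<Longrightarrow> G s > 0"
    and decr: "strict_antimono_on {s0..} G"
    and neg: "G b < 0"
  shows "\<exists>!s. G s = 0"
proof -
  have "s0 \<le> b" using pos[of b] neg by linarith
  then obtain z where z: "s0 \<le> z" "z \<le> b" "G z = 0"
    using IVT2'[of G b 0 s0] neg pos[of s0] continuous_on_subset[OF cont] by auto
  have "s0 < s" if "G s = 0" for s using pos[of s] that by force
  then have "s = z" if "G s = 0" for s
    using that z(3) monotone_onD[OF decr, of s z] monotone_onD[OF decr, of z s]
    by (metis atLeast_iff less_eq_real_def linorder_neqE_linordered_idom order_less_irrefl)
  with z(3) show ?thesis by blast
qed

lemma ex1_tangent_through_point:
  fixes F F' F'' :: "real \<Rightarrow> real"
  assumes F': "\<And>s. (F has_real_derivative F' s) (at s)"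
    and F'': "\<And>s. (F' has_real_derivative F'' s) (at s)"
    and pos: "\<And>s. F s > 0" "\<And>s. F' s > 0" "\<And>s. F'' s > 0"
    and mono: "mono F''"
  shows "\<exists>!s. F s + (s0 - s) * F' s = 0"
proof -
  define G where "G s = F s + (s0 - s) * F' s" for s
  have G': "(G has_real_derivative (s0 - s) * F'' s) (at s)" for s
    unfolding G_def by (auto intro!: derivative_eq_intros F' F'' simp: algebra_simps)
  have cont: "continuous_on UNIV G"
    using G' by (meson DERIV_isCont continuous_at_imp_continuous_on)
  have "G s > 0" if "s \<le> s0" for s
    using pos(1)[of s] pos(2)[of s] that unfolding G_def by (smt (verit) mult_nonneg_nonneg)
  moreover have "strict_antimono_on {s0..} G"
  proof (rule monotone_onI)
    fix a b assume "a \<in> {s0..}" "b \<in> {s0..}" "a < b"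
    then show "G b < G a"
      using DERIV_neg_imp_decreasing_open[OF \<open>a < b\<close>, of G] G' pos(3)
        continuous_on_subset[OF cont]
      by (fastforce intro: mult_neg_pos)
  qed
  moreover obtain b where "G b < 0"
  proof -
    define s1 where "s1 = s0 + 1"
    define b where "b = s1 + (\<bar>G s1\<bar> + 1) / F'' s1"
    have "s1 < b" unfolding b_def using pos(3)[of s1] by (simp add: add_pos_nonneg)
    then obtain z where z: "s1 < z" "z < b" "G b - G s1 = (b - s1) * ((s0 - z) * F'' z)"
      using MVT2[of s1 b G "\<lambda>s. (s0 - s) * F'' s"] G' by blast
    have "(s0 - z) * F'' z \<le> (- 1) * F'' z"
      using z pos(3)[of z] unfolding s1_def by (intro mult_right_mono) auto
    also have "\<dots> \<le> - F'' s1" using monoD[OF mono, of s1 z] z by simp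
    finally have "G b - G s1 \<le> (b - s1) * (- F'' s1)"
      using z(3) \<open>s1 < b\<close> by (metis diff_gt_0_iff_gt less_eq_real_def mult_left_mono)
    also have "\<dots> = - (\<bar>G s1\<bar> + 1)" unfolding b_def using pos(3)[of s1] by simp
    finally have "G b < 0" by linarith
    then show ?thesis by (rule that)
  qed
  ultimately show ?thesis
    unfolding G_def[symmetric] by (rule ex1_zero_if_pos_then_strict_antimono[OF cont])
qed

lemma abs_exp_minus_one_le: "\<bar>exp x - 1\<bar> \<le> \<bar>x\<bar> * exp \<bar>x\<bar>" for x :: real
proof (cases "x \<ge> 0")
  case True
  have "exp x * (1 - x) \<le> exp x * exp (- x)"
    using exp_ge_add_one_self[of "- x"] by (intro mult_left_mono) auto
  then show ?thesis using True by (simp add: exp_minus algebra_simps)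
next
  case False
  have "1 - exp x \<le> - x" using exp_ge_add_one_self[of x] by linarith
  also have "\<dots> \<le> - x * exp (- x)" using False by simp
  finally show ?thesis using False by simp
qed

lemma abs_exp_difference_quotient_le:
  fixes h t B :: real
  assumes "t \<ge> 0" "\<bar>h\<bar> \<le> B" "h \<noteq> 0"
  shows "\<bar>(exp (h * t) - 1) / h\<bar> \<le> t * exp (B * t)"
proof -
  have "\<bar>exp (h * t) - 1\<bar> \<le> \<bar>h * t\<bar> * exp \<bar>h * t\<bar>" by (rule abs_exp_minus_one_le)
  also have "\<dots> \<le> \<bar>h\<bar> * (t * exp (B * t))"
    using assms by (auto simp: abs_mult intro!: mult_left_mono mult_right_mono)
  finally show ?thesis using assms by (simp add: divide_le_eq abs_divide mult_ac)
qed

lemma tendsto_exp_difference_quotient: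
  fixes X :: "nat \<Rightarrow> real"
  assumes "X \<longlonglongrightarrow> 0" "\<And>i. X i \<noteq> 0"
  shows "(\<lambda>i. (exp (X i * t) - 1) / X i) \<longlonglongrightarrow> t"
proof -
  have "((\<lambda>h. exp (h * t)) has_real_derivative t) (at 0)"
    by (auto intro!: derivative_eq_intros)
  then have "((\<lambda>h. (exp (h * t) - 1) / h) \<longlongrightarrow> t) (at 0)"
    unfolding DERIV_def by simp
  then show ?thesis
    unfolding tendsto_at_iff_sequentially comp_def using assms by auto
qed

lemma has_real_derivative_set_integral_exp:
  fixes f :: "real \<Rightarrow> real"
  assumes f: "\<And>x. set_integrable lborel {0<..} (\<lambda>t. f t * exp (x * t))"
    and tf: "\<And>x. set_integrable lborel {0<..} (\<lambda>t. t * f t * exp (x * t))"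
  shows "((\<lambda>x. LBINT t:{0<..}. f t * exp (x * t)) has_real_derivative
           (LBINT t:{0<..}. t * f t * exp (s * t))) (at s)"
  unfolding DERIV_def tendsto_at_iff_sequentially comp_def
proof (intro allI impI)
  fix X :: "nat \<Rightarrow> real"
  assume "\<forall>i. X i \<in> UNIV - {0}" and X: "X \<longlonglongrightarrow> 0"
  then have X0: "X i \<noteq> 0" for i by auto
  obtain B where B: "\<And>i. \<bar>X i\<bar> \<le> B"
    using BseqE[OF convergent_imp_Bseq[OF convergentI[OF X]]] by auto
  define q where "q h t = indicator {0<..} t * (f t * exp (s * t) * (exp (h * t) - 1)) / h"
    for h t :: real
  have quot: "((LBINT t:{0<..}. f t * exp ((s + h) * t)) - (LBINT t:{0<..}. f t * exp (s * t))) / h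
      = integral\<^sup>L lborel (q h)" for h
  proof -
    have "integral\<^sup>L lborel (q h) = (LBINT t:{0<..}. f t * exp (s * t) * (exp (h * t) - 1)) / h"
      by (simp add: q_def[abs_def] set_lebesgue_integral_def)
    also have "(LBINT t:{0<..}. f t * exp (s * t) * (exp (h * t) - 1))
        = (LBINT t:{0<..}. f t * exp ((s + h) * t) - f t * exp (s * t))"
      by (simp add: algebra_simps exp_add)
    also have "\<dots> = (LBINT t:{0<..}. f t * exp ((s + h) * t)) - (LBINT t:{0<..}. f t * exp (s * t))"
      by (rule set_integral_diff(2)[OF f f])
    finally show ?thesis ..
  qed
  define w where "w t = indicator {0<..} t * \<bar>t * f t * exp ((s + B) * t)\<bar>" for t :: real
  have "(\<lambda>i. integral\<^sup>L lborel (q (X i)))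
          \<longlonglongrightarrow> integral\<^sup>L lborel (\<lambda>t. indicator {0<..} t * (t * f t * exp (s * t)))"
  proof (rule integral_dominated_convergence)
    show "integrable lborel w"
      using set_integrable_abs[OF tf[of "s + B"]] by (simp add: w_def[abs_def] set_integrable_def)
    show "AE t in lborel. (\<lambda>i. q (X i) t) \<longlonglongrightarrow> indicator {0<..} t * (t * f t * exp (s * t))"
    proof (intro AE_I2)
      fix t :: real
      have "q (X i) t = indicator {0<..} t * f t * exp (s * t) * ((exp (X i * t) - 1) / X i)" for i
        by (simp add: q_def)
      moreover have "(\<lambda>i. indicator {0<..} t * f t * exp (s * t) * ((exp (X i * t) - 1) / X i))
          \<longlonglongrightarrow> indicator {0<..} t * f t * exp (s * t) * t"
        by (intro tendsto_mult_left tendsto_exp_difference_quotient[OF X X0])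
      ultimately show "(\<lambda>i. q (X i) t) \<longlonglongrightarrow> indicator {0<..} t * (t * f t * exp (s * t))"
        by (simp add: mult_ac)
    qed
    show "AE t in lborel. norm (q (X i) t) \<le> w t" for i
    proof (intro AE_I2)
      fix t :: real
      show "norm (q (X i) t) \<le> w t"
      proof (cases "t > 0")
        case True
        then have "norm (q (X i) t) = \<bar>f t * exp (s * t)\<bar> * \<bar>(exp (X i * t) - 1) / X i\<bar>"
          by (simp add: q_def abs_mult)
        also have "\<dots> \<le> \<bar>f t * exp (s * t)\<bar> * (t * exp (B * t))"
          using abs_exp_difference_quotient_le[of t "X i" B] True B X0 by (intro mult_left_mono) auto
        also have "\<dots> = w t"
          using True by (simp add: w_def abs_mult algebra_simps flip: exp_add)
        finally show ?thesis .
      qed (simp add: q_def w_def)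
    qed
    have meas: "(\<lambda>t. indicator {0<..} t * g t) \<in> borel_measurable lborel"
      if "set_integrable lborel {0<..} g" for g :: "real \<Rightarrow> real"
      using borel_measurable_integrable[OF that[unfolded set_integrable_def]] by simp
    show "(\<lambda>t. indicator {0<..} t * (t * f t * exp (s * t))) \<in> borel_measurable lborel"
      by (rule meas[OF tf])
    have "q h = (\<lambda>t. (indicator {0<..} t * (f t * exp ((s + h) * t))
                      - indicator {0<..} t * (f t * exp (s * t))) / h)" for h
      by (auto simp: q_def algebra_simps exp_add)
    then show "q (X i) \<in> borel_measurable lborel" for i
      using meas[OF f] by simp
  qed
  then show "(\<lambda>i. ((LBINT t:{0<..}. f t * exp ((s + X i) * t)) - (LBINT t:{0<..}. f t * exp (s * t))) / X i)
      \<longlonglongrightarrow> (LBINT t:{0<..}. t * f t * exp (s * t))"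
    unfolding quot by (simp add: set_lebesgue_integral_def)
qed

lemma set_integral_greaterThan_pos:
  fixes f :: "real \<Rightarrow> real"
  assumes f: "set_integrable lborel {a<..} f" and pos: "\<And>t. t > a \<Longrightarrow> f t > 0"
  shows "(LBINT t:{a<..}. f t) > 0"
proof -
  let ?g = "\<lambda>t. indicator {a<..} t * f t"
  have int: "integrable lborel ?g" using f by (simp add: set_integrable_def)
  have nonneg: "AE t in lborel. 0 \<le> ?g t"
    using pos by (intro AE_I2) (auto simp: indicator_def less_imp_le)
  have "(LBINT t:{a<..}. f t) \<noteq> 0"
  proof
    assume "(LBINT t:{a<..}. f t) = 0"
    then have "AE t in lborel. ?g t = 0"
      using integral_nonneg_eq_0_iff_AE[OF int nonneg] by (simp add: set_lebesgue_integral_def)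
    then have "AE t in lborel. t \<notin> {a<..a + 1}"
      by eventually_elim (auto simp: indicator_def dest: pos)
    then have "emeasure lborel {a<..a + 1} = 0"
      by (subst (asm) AE_iff_measurable[of "{a<..a + 1}"]) auto
    then show False by simp
  qed
  moreover have "(LBINT t:{a<..}. f t) \<ge> 0"
    using integral_nonneg_AE[OF nonneg] by (simp add: set_lebesgue_integral_def)
  ultimately show ?thesis by simp
qed

lemma set_integrable_Gamma_integrand:
  fixes p :: real
  assumes "p > 0"
  shows "set_integrable lborel {0<..} (\<lambda>t. t powr (p - 1) / exp t)"
proof -
  have "(\<lambda>t. t powr (p - 1) / exp t) absolutely_integrable_on {0..}"
    using has_integral_integrable[OF Gamma_integral_real[OF assms]]
    by (subst absolutely_integrable_on_iff_nonneg) auto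
  then have "set_integrable lebesgue {0<..} (\<lambda>t. t powr (p - 1) / exp t)"
    by (rule set_integrable_subset) auto
  moreover have "(\<lambda>t. indicator {0<..} t *\<^sub>R (t powr (p - 1) / exp t)) \<in> borel_measurable borel"
    by (rule borel_measurable_continuous_on_indicator) (auto intro!: continuous_intros)
  ultimately show ?thesis
    unfolding set_integrable_def by (subst (asm) integrable_completion) auto
qed

definition gauss_moment :: "real \<Rightarrow> real \<Rightarrow> real" where
  "gauss_moment p s = (LBINT t:{0<..}. t powr (p - 1) * exp (- (t\<^sup>2) / 2) * exp (s * t))"

lemma set_integrable_gauss_moment:
  fixes p s :: real
  assumes "p > 0"
  shows "set_integrable lborel {0<..} (\<lambda>t. t powr (p - 1) * exp (- (t\<^sup>2) / 2) * exp (s * t))"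
proof (rule set_integrable_bound)
  show "set_integrable lborel {0<..} (\<lambda>t. exp ((s + 1)\<^sup>2 / 2) * (t powr (p - 1) / exp t))"
    using set_integrable_Gamma_integrand[OF assms] by (rule set_integrable_mult_right)
  show "set_borel_measurable lborel {0<..} (\<lambda>t. t powr (p - 1) * exp (- (t\<^sup>2) / 2) * exp (s * t))"
  proof -
    have "(\<lambda>t. indicator {0<..} t *\<^sub>R (t powr (p - 1) * exp (- (t\<^sup>2) / 2) * exp (s * t)))
        \<in> borel_measurable borel"
      by (rule borel_measurable_continuous_on_indicator) (auto intro!: continuous_intros)
    then show ?thesis by (simp add: set_borel_measurable_def)
  qed
  have "norm (t powr (p - 1) * exp (- (t\<^sup>2) / 2) * exp (s * t))
      \<le> norm (exp ((s + 1)\<^sup>2 / 2) * (t powr (p - 1) / exp t))" for t :: real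
  proof -
    have "- (t\<^sup>2) / 2 + s * t \<le> (s + 1)\<^sup>2 / 2 - t"
      using zero_le_power2[of "t - (s + 1)"] by (simp add: power2_eq_square algebra_simps)
    then have "exp (- (t\<^sup>2) / 2) * exp (s * t) \<le> exp ((s + 1)\<^sup>2 / 2) / exp t"
      by (simp flip: exp_add exp_diff)
    then have "t powr (p - 1) * (exp (- (t\<^sup>2) / 2) * exp (s * t))
        \<le> t powr (p - 1) * (exp ((s + 1)\<^sup>2 / 2) / exp t)"
      by (intro mult_left_mono) auto
    then show ?thesis by (simp add: abs_mult mult_ac)
  qed
  then show "AE t in lborel. t \<in> {0<..} \<longrightarrow>
      norm (t powr (p - 1) * exp (- (t\<^sup>2) / 2) * exp (s * t))
        \<le> norm (exp ((s + 1)\<^sup>2 / 2) * (t powr (p - 1) / exp t))"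
    by simp
qed

lemma gauss_moment_pos:
  assumes "p > 0"
  shows "gauss_moment p s > 0"
  unfolding gauss_moment_def
  by (rule set_integral_greaterThan_pos[OF set_integrable_gauss_moment[OF assms]]) simp

lemma gauss_moment_has_real_derivative:
  assumes "p > 0"
  shows "(gauss_moment p has_real_derivative gauss_moment (p + 1) s) (at s)"
proof -
  define f where "f t = t powr (p - 1) * exp (- (t\<^sup>2) / 2)" for t :: real
  have shift: "t * f t * exp (x * t) = t powr (p + 1 - 1) * exp (- (t\<^sup>2) / 2) * exp (x * t)"
    if "t \<in> {0<..}" for t x
    using that by (simp add: f_def powr_mult_base mult.assoc)
  have "((\<lambda>x. LBINT t:{0<..}. f t * exp (x * t)) has_real_derivative
          (LBINT t:{0<..}. t * f t * exp (s * t))) (at s)"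
  proof (rule has_real_derivative_set_integral_exp)
    show "set_integrable lborel {0<..} (\<lambda>t. f t * exp (x * t))" for x
      using set_integrable_gauss_moment[OF assms] by (simp add: f_def)
    show "set_integrable lborel {0<..} (\<lambda>t. t * f t * exp (x * t))" for x
      using set_integrable_gauss_moment[of "p + 1" x] assms
      by (subst set_integrable_cong[OF refl refl shift]) auto
  qed
  moreover have "(\<lambda>x. LBINT t:{0<..}. f t * exp (x * t)) = gauss_moment p"
    by (simp add: f_def gauss_moment_def fun_eq_iff)
  moreover have "(LBINT t:{0<..}. t * f t * exp (s * t)) = gauss_moment (p + 1) s"
    unfolding gauss_moment_def by (rule set_lebesgue_integral_cong) (auto simp: shift)
  ultimately show ?thesis by simp
qed

lemma strict_mono_gauss_moment:
  assumes "p > 0"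
  shows "strict_mono (gauss_moment p)"
proof (rule strict_monoI)
  fix a b :: real
  assume "a < b"
  have "\<exists>y. (gauss_moment p has_real_derivative y) (at x) \<and> y > 0" for x
    using gauss_moment_has_real_derivative[OF assms] gauss_moment_pos[of "p + 1"] assms by auto
  then show "gauss_moment p a < gauss_moment p b"
    by (rule DERIV_pos_imp_increasing[OF \<open>a < b\<close>])
qed

lemma psi_fun_eq_gauss_moment:
  fixes \<mu> \<kappa> \<sigma> \<rho> x :: real
  assumes "\<kappa> > 0" "\<sigma> > 0"
  shows "psi_fun \<mu> \<kappa> \<sigma> \<rho> x
    = gauss_moment (\<rho> / \<kappa>) (sqrt (2 * \<kappa>) / \<sigma> * (x - \<mu>)) / Gamma (\<rho> / \<kappa>)"
proof -
  define z where "z = - ((x - \<mu>) / \<sigma>) * sqrt (2 * \<kappa>)"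
  have "z\<^sup>2 = 2 * \<kappa> * (x - \<mu>)\<^sup>2 / \<sigma>\<^sup>2"
    unfolding z_def using assms by (simp add: power_mult_distrib power_divide)
  then have prefactor: "exp (\<kappa> * (x - \<mu>)\<^sup>2 / (2 * \<sigma>\<^sup>2)) * exp (- (z\<^sup>2) / 4) = 1"
    by (simp flip: exp_add)
  have "(LBINT t:{0<..}. t powr (- (- \<rho> / \<kappa>) - 1) * exp (- (t\<^sup>2) / 2 - z * t))
      = gauss_moment (\<rho> / \<kappa>) (sqrt (2 * \<kappa>) / \<sigma> * (x - \<mu>))"
    unfolding gauss_moment_def z_def
    by (rule set_lebesgue_integral_cong) (auto simp: algebra_simps simp flip: exp_add)
  then show ?thesis
    unfolding psi_fun_def parabolic_cylinder_D_def z_def[symmetric]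
    using prefactor by (simp add: field_simps)
qed

lemma H_fun_eq:
  fixes \<mu> \<kappa> \<sigma> \<rho> \<beta> c ybar x :: real
  assumes "\<kappa> > 0" "\<sigma> > 0" "\<rho> > 0"
  defines "\<nu> \<equiv> \<rho> / \<kappa>" and "a \<equiv> sqrt (2 * \<kappa>) / \<sigma>"
    and "x0 \<equiv> (c * \<rho> * (\<rho> + \<kappa>) - \<mu> * \<kappa> + \<beta> * (\<rho> + 2 * \<kappa>) * ybar) / \<rho>"
  shows "H_fun \<mu> \<kappa> \<sigma> \<rho> \<beta> c ybar x
    = (gauss_moment \<nu> (a * (x - \<mu>))
        + (a * (x0 - \<mu>) - a * (x - \<mu>)) * gauss_moment (\<nu> + 1) (a * (x - \<mu>)))
      / (Gamma \<nu> * (\<rho> + \<kappa>))"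
proof -
  have "\<nu> > 0" using assms by (simp add: \<nu>_def)
  have psi: "psi_fun \<mu> \<kappa> \<sigma> \<rho> = (\<lambda>x. gauss_moment \<nu> (a * (x - \<mu>)) / Gamma \<nu>)"
    using psi_fun_eq_gauss_moment[OF assms(1,2)] by (simp add: \<nu>_def a_def fun_eq_iff)
  have "((\<lambda>x. a * (x - \<mu>)) has_real_derivative a) (at x)"
    by (auto intro!: derivative_eq_intros)
  then have "((\<lambda>x. gauss_moment \<nu> (a * (x - \<mu>))) has_real_derivative
               gauss_moment (\<nu> + 1) (a * (x - \<mu>)) * a) (at x)"
    by (rule DERIV_chain2[OF gauss_moment_has_real_derivative[OF \<open>\<nu> > 0\<close>]])
  then have "((\<lambda>x. gauss_moment \<nu> (a * (x - \<mu>)) / Gamma \<nu>) has_real_derivative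
               gauss_moment (\<nu> + 1) (a * (x - \<mu>)) * a / Gamma \<nu>) (at x)"
    by (rule DERIV_cdivide)
  then have dpsi:
      "deriv (psi_fun \<mu> \<kappa> \<sigma> \<rho>) x = gauss_moment (\<nu> + 1) (a * (x - \<mu>)) * a / Gamma \<nu>"
    unfolding psi by (rule DERIV_imp_deriv)
  have "\<rho> > 0" "\<rho> + \<kappa> > 0" "\<rho> * (\<rho> + \<kappa>) > 0" using assms by auto
  then have cR: "c - R_tilde \<mu> \<kappa> \<rho> \<beta> x ybar = (x0 - x) / (\<rho> + \<kappa>)"
    by (simp add: R_tilde_def x0_def field_simps)
  have collect: "g1 * a / G * ((x0 - x) / d) + g0 / G / d
      = (g0 + (a * (x0 - \<mu>) - a * (x - \<mu>)) * g1) / (G * d)"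
    if "G \<noteq> 0" "d \<noteq> 0" for g0 g1 G d :: real
    using that by (simp add: field_simps)
  show ?thesis
    unfolding H_fun_def dpsi cR unfolding psi
    using \<open>\<rho> + \<kappa> > 0\<close> Gamma_real_pos[OF \<open>\<nu> > 0\<close>] by (intro collect) simp_all
qed

lemma ex1_comp_affine:
  fixes a \<mu> :: real
  assumes "\<exists>!s. P s" and "a \<noteq> 0"
  shows "\<exists>!x. P (a * (x - \<mu>))"
proof -
  obtain s where "P s" and unique: "\<And>t. P t \<Longrightarrow> t = s" using assms(1) by blast
  show ?thesis
  proof (rule ex1I[of _ "\<mu> + s / a"])
    show "P (a * (\<mu> + s / a - \<mu>))" using \<open>P s\<close> assms(2) by simp
    show "y = \<mu> + s / a" if "P (a * (y - \<mu>))" for y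
      using unique[OF that] assms(2) by (simp add: field_simps)
  qed
qed

theorem lemma4p2:
  fixes \<mu> \<kappa> \<sigma> \<rho> \<beta> c ybar :: real
  assumes "\<kappa> > 0" and "\<sigma> > 0" and "\<rho> > 0" and "\<beta> > 0" and "c \<ge> 0" and "ybar > 0"
  shows "\<exists>!x. H_fun \<mu> \<kappa> \<sigma> \<rho> \<beta> c ybar x = 0"
proof -
  define \<nu> where "\<nu> = \<rho> / \<kappa>"
  define a where "a = sqrt (2 * \<kappa>) / \<sigma>"
  define x0 where "x0 = (c * \<rho> * (\<rho> + \<kappa>) - \<mu> * \<kappa> + \<beta> * (\<rho> + 2 * \<kappa>) * ybar) / \<rho>"
  have "\<nu> > 0" "a > 0" using assms by (simp_all add: \<nu>_def a_def)
  define G where "G s = gauss_moment \<nu> s + (a * (x0 - \<mu>) - s) * gauss_moment (\<nu> + 1) s" for s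
  have "\<exists>!s. G s = 0"
    unfolding G_def using \<open>\<nu> > 0\<close>
    by (intro ex1_tangent_through_point[of _ "gauss_moment (\<nu> + 1)" "gauss_moment (\<nu> + 1 + 1)"]
          gauss_moment_has_real_derivative gauss_moment_pos
          strict_mono_mono strict_mono_gauss_moment) simp_all
  then have "\<exists>!x. G (a * (x - \<mu>)) = 0"
    using \<open>a > 0\<close> by (intro ex1_comp_affine) simp_all
  moreover have "H_fun \<mu> \<kappa> \<sigma> \<rho> \<beta> c ybar x = 0 \<longleftrightarrow> G (a * (x - \<mu>)) = 0" for x
    using H_fun_eq[OF assms(1-3), of \<mu> \<beta> c ybar x, folded \<nu>_def a_def x0_def]
      Gamma_real_pos[OF \<open>\<nu> > 0\<close>] assms(1,3)
    by (simp add: G_def)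
  ultimately show ?thesis by simp
qed

end
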